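(* Let $c\ge0$, $d\in\{0,1,2,\dots\}$, $\lambda>0$, $q=e^{-\lambda/N}$, $\mathsf{s}=e^{-\lambda}$, and fix integers $p\ge1$, $0\le i\le p$. Then as $N\to\infty$, $$\int_0^1 f_i^{(c,d)}(Nt)\,dt=\Big(\frac{N}{\lambda}\Big)^p\frac{1}{i!(p-i)!}\Big(\mathcal{A}_{i,0}+\big(\mathcal{A}^{(1)}_{i,1}+\mathcal{A}^{(2)}_{i,1}+\mathcal{A}^{(3)}_{i,1}\big)\frac{\lambda}{N}+O(N^{-2})\Big),$$ where $\mathcal{A}_{i,0}=\mathsf{s}^{c(p-i)}\int_0^1\mathsf{s}^{pt}(1-\mathsf{s}^t)^{p-i}(1-\mathsf{s}^{c+t})^i\,dt$, $\mathcal{A}^{(1)}_{i,1}=\mathsf{s}^{c(p-i+1)}\frac{i(2d-i+1)}{2}\int_0^1\mathsf{s}^{(p+1)t}(1-\mathsf{s}^t)^{p-i}(1-\mathsf{s}^{c+t})^{i-1}\,dt$, $\mathcal{A}^{(2)}_{i,1}=\mathsf{s}^{c(p-i)}\frac{(p-i)(p-i+1)}{2}\int_0^1\mathsf{s}^{(p+1)t}(1-\mathsf{s}^t)^{p-i-1}(1-\mathsf{s}^{c+t})^{i}\,dt$, $\mathcal{A}^{(3)}_{i,1}=\frac{4di+2i^2+p-4dp-2ip+p^2}{4}\mathcal{A}_{i,0}$.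
   Context: For real $x$ and integer $m\ge0$ define $\begin{bmatrix} x\\ m\end{bmatrix}_q=\prod_{k=1}^{m}\frac{1-q^{x-m+k}}{1-q^{k}}$ (the usual $q$-binomial when $x$ is an integer). For real $y\ge0$ define $f_i^{(c,d)}(y)=q^{(cN+d)(p-i)+py}\begin{bmatrix} cN+d+y\\ i\end{bmatrix}_q\begin{bmatrix} p-i+y\\ p-i\end{bmatrix}_q$. *)

theory Defs
  imports "HOL-Analysis.Analysis" "HOL-Library.Landau_Symbols"
begin

definition qbinom :: "real \<Rightarrow> real \<Rightarrow> nat \<Rightarrow> real" where
  "qbinom q x m = (\<Prod>k=1..m. (1 - q powr (x - real m + real k)) / (1 - q ^ k))"

definition fcd :: "real \<Rightarrow> nat \<Rightarrow> nat \<Rightarrow> real \<Rightarrow> real \<Rightarrow> nat \<Rightarrow> real \<Rightarrow> real" where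
  "fcd q p i c N d y =
     q powr ((c * N + real d) * real (p - i) + real p * y)
     * qbinom q (c * N + real d + y) i
     * qbinom q (real (p - i) + y) (p - i)"

end

theory Submission
  imports Defs "HOL-Real_Asymp.Real_Asymp"
begin

(* Put u = lam / N, so that q = exp (-u) and s = exp (-lam) = q^N.  Clearing the q-factorials,
   f_i^(c,d)(N t) = G(u, t) / (u^p i! (p-i)! Q(u)), where G is a finite product of factors
   1 - g(t) exp (-u r) and Q(u) = 1 - sigma u + O(u^2) with sigma = (i(i+1) + (p-i)(p-i+1))/4.
   Every factor of G has a first-order expansion in u that is uniform in t \<in> [0, 1], so
   G(u, t) = a(t) + b(t) u + O(u^2) uniformly, and integrating gives
   A0 + (A1 + A2 - d (p-i) A0) u + O(u^2).  Dividing by Q yields A0 + (A1 + A2 + A3) u + O(u^2),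
   since A3 = (sigma - d (p-i)) A0, and u = lam / N gives the claim. *)

(* Along at_right 0 \<times>\<^sub>F principal T with \<epsilon> = fst, this is an expansion as u \<rightarrow> 0+ that is
   uniform in t \<in> T. *)
definition first_order_expansion ::
    "'a filter \<Rightarrow> ('a \<Rightarrow> real) \<Rightarrow> ('a \<Rightarrow> real) \<Rightarrow> ('a \<Rightarrow> real) \<Rightarrow> ('a \<Rightarrow> real) \<Rightarrow> bool" where
  "first_order_expansion F \<epsilon> f a b \<longleftrightarrow>
     a \<in> O[F](\<lambda>_. 1) \<and> b \<in> O[F](\<lambda>_. 1) \<and> (\<lambda>x. f x - a x - b x * \<epsilon> x) \<in> O[F](\<lambda>x. \<epsilon> x ^ 2)"

lemma tendsto_imp_bigo_1:
  fixes f :: "'a \<Rightarrow> real"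
  shows "(f \<longlongrightarrow> l) F \<Longrightarrow> f \<in> O[F](\<lambda>_. 1)"
  by (rule bigoI_tendsto[where c = l]) simp_all

lemma first_order_expansion_cong:
  assumes "first_order_expansion F \<epsilon> f a b"
    and "\<And>x. f x = f' x" "\<And>x. a x = a' x" "\<And>x. b x = b' x"
  shows "first_order_expansion F \<epsilon> f' a' b'"
proof -
  have "f = f'" "a = a'" "b = b'"
    using assms(2-4) by auto
  with assms(1) show ?thesis by simp
qed

lemma first_order_expansion_const:
  "a \<in> O[F](\<lambda>_. 1) \<Longrightarrow> first_order_expansion F \<epsilon> a a (\<lambda>_. 0)"
  by (simp add: first_order_expansion_def)

lemma first_order_expansion_add:
  assumes "first_order_expansion F \<epsilon> f a b" "first_order_expansion F \<epsilon> g a' b'"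
  shows "first_order_expansion F \<epsilon> (\<lambda>x. f x + g x) (\<lambda>x. a x + a' x) (\<lambda>x. b x + b' x)"
proof -
  have "(\<lambda>x. (f x - a x - b x * \<epsilon> x) + (g x - a' x - b' x * \<epsilon> x)) \<in> O[F](\<lambda>x. \<epsilon> x ^ 2)"
    using assms unfolding first_order_expansion_def by (intro sum_in_bigo(1)) blast+
  moreover have "(\<lambda>x. f x + g x - (a x + a' x) - (b x + b' x) * \<epsilon> x) =
      (\<lambda>x. (f x - a x - b x * \<epsilon> x) + (g x - a' x - b' x * \<epsilon> x))"
    by (simp add: algebra_simps)
  ultimately show ?thesis
    using assms unfolding first_order_expansion_def by (simp add: sum_in_bigo)
qed

lemma first_order_expansion_bigo_1:
  assumes "(\<epsilon> \<longlongrightarrow> 0) F" "first_order_expansion F \<epsilon> f a b"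
  shows "f \<in> O[F](\<lambda>_. 1)"
proof -
  have \<epsilon>: "\<epsilon> \<in> O[F](\<lambda>_. 1)" "(\<lambda>x. \<epsilon> x ^ 2) \<in> O[F](\<lambda>_. 1)"
    using assms(1) by (auto intro!: tendsto_imp_bigo_1 tendsto_power)
  have "(\<lambda>x. f x - a x - b x * \<epsilon> x) \<in> O[F](\<lambda>_. 1)"
    using assms(2) unfolding first_order_expansion_def by (blast intro: landau_o.big_trans[OF _ \<epsilon>(2)])
  then have "(\<lambda>x. a x + b x * \<epsilon> x + (f x - a x - b x * \<epsilon> x)) \<in> O[F](\<lambda>_. 1)"
    using assms(2) \<epsilon> unfolding first_order_expansion_def
    by (intro sum_in_bigo(1) landau_o.big.mult_in_1) auto
  then show ?thesis
    by simp
qed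

lemma first_order_expansion_mult:
  assumes "(\<epsilon> \<longlongrightarrow> 0) F" "first_order_expansion F \<epsilon> f a b" "first_order_expansion F \<epsilon> g a' b'"
  shows "first_order_expansion F \<epsilon> (\<lambda>x. f x * g x) (\<lambda>x. a x * a' x) (\<lambda>x. a x * b' x + b x * a' x)"
proof -
  define r where "r = (\<lambda>x. f x - a x - b x * \<epsilon> x)"
  define r' where "r' = (\<lambda>x. g x - a' x - b' x * \<epsilon> x)"
  have \<epsilon>: "\<epsilon> \<in> O[F](\<lambda>_. 1)"
    using assms(1) by (rule tendsto_imp_bigo_1)
  have g: "g \<in> O[F](\<lambda>_. 1)"
    using assms(1,3) by (rule first_order_expansion_bigo_1)
  have "(\<lambda>x. r x * g x + r' x * a x + \<epsilon> x ^ 2 * (b x * b' x) + r' x * (b x * \<epsilon> x))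
      \<in> O[F](\<lambda>x. \<epsilon> x ^ 2)"
    using assms(2,3) \<epsilon> g unfolding first_order_expansion_def r_def r'_def
    by (intro sum_in_bigo(1) landau_o.big_1_mult landau_o.big.mult_in_1) auto
  moreover have "(\<lambda>x. f x * g x - a x * a' x - (a x * b' x + b x * a' x) * \<epsilon> x) =
      (\<lambda>x. r x * g x + r' x * a x + \<epsilon> x ^ 2 * (b x * b' x) + r' x * (b x * \<epsilon> x))"
    by (simp add: r_def r'_def algebra_simps power2_eq_square)
  ultimately show ?thesis
    using assms(2,3) unfolding first_order_expansion_def
    by (auto intro!: sum_in_bigo(1) landau_o.big.mult_in_1)
qed

lemma first_order_expansion_prod:
  assumes "(\<epsilon> \<longlongrightarrow> 0) F" "finite K"
    and "\<And>k. k \<in> K \<Longrightarrow> first_order_expansion F \<epsilon> (f k) a (b k)"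
  shows "first_order_expansion F \<epsilon> (\<lambda>x. \<Prod>k\<in>K. f k x) (\<lambda>x. a x ^ card K)
           (\<lambda>x. (\<Sum>k\<in>K. b k x) * a x ^ (card K - 1))"
  using assms(2,3)
proof (induction K rule: finite_induct)
  case empty
  show ?case
    using first_order_expansion_const[of "\<lambda>_. 1" F \<epsilon>] by simp
next
  case (insert j K)
  have "first_order_expansion F \<epsilon> (\<lambda>x. f j x * (\<Prod>k\<in>K. f k x)) (\<lambda>x. a x * a x ^ card K)
      (\<lambda>x. a x * ((\<Sum>k\<in>K. b k x) * a x ^ (card K - 1)) + b j x * a x ^ card K)"
    using insert by (intro first_order_expansion_mult[OF assms(1)]) auto
  moreover have "a x * ((\<Sum>k\<in>K. b k x) * a x ^ (card K - 1)) + b j x * a x ^ card K =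
      (\<Sum>k\<in>insert j K. b k x) * a x ^ (card (insert j K) - 1)" for x
  proof (cases "K = {}")
    case False
    then have "card K = Suc (card K - 1)"
      using insert.hyps(1) by (simp add: card_gt_0_iff)
    then have "a x * a x ^ (card K - 1) = a x ^ card K"
      by (metis power_Suc)
    then show ?thesis
      using insert.hyps by (simp add: algebra_simps)
  qed simp
  ultimately show ?case
    using insert.hyps by (simp add: first_order_expansion_cong)
qed

lemma first_order_expansion_divide:
  assumes "(\<epsilon> \<longlongrightarrow> 0) F" "first_order_expansion F \<epsilon> f a b"
    and "first_order_expansion F \<epsilon> g (\<lambda>_. 1) b'"
  shows "first_order_expansion F \<epsilon> (\<lambda>x. f x / g x) a (\<lambda>x. b x - a x * b' x)"
proof -
  define c where "c = (\<lambda>x. b x - a x * b' x)"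
  define r where "r = (\<lambda>x. f x - a x - b x * \<epsilon> x)"
  define r' where "r' = (\<lambda>x. g x - 1 - b' x * \<epsilon> x)"
  have \<epsilon>: "\<epsilon> \<in> O[F](\<lambda>_. 1)" "\<epsilon> \<in> o[F](\<lambda>_. 1)" "(\<lambda>x. \<epsilon> x ^ 2) \<in> o[F](\<lambda>_. 1)"
    using assms(1) by (auto intro!: tendsto_imp_bigo_1 smalloI_tendsto tendsto_power_zero)
  have ab: "a \<in> O[F](\<lambda>_. 1)" "b \<in> O[F](\<lambda>_. 1)" "b' \<in> O[F](\<lambda>_. 1)" "c \<in> O[F](\<lambda>_. 1)"
    and rr: "r \<in> O[F](\<lambda>x. \<epsilon> x ^ 2)" "r' \<in> O[F](\<lambda>x. \<epsilon> x ^ 2)"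
    using assms(2,3) unfolding first_order_expansion_def c_def r_def r'_def
    by (auto intro!: sum_in_bigo(2) landau_o.big.mult_in_1)
  have "(\<lambda>x. \<epsilon> x * b' x + r' x) \<in> o[F](\<lambda>_. 1)"
    using landau_o.small_1_mult[OF \<epsilon>(2) ab(3)] landau_o.big_small_trans[OF rr(2) \<epsilon>(3)]
    by (rule sum_in_smallo(1))
  then have "((\<lambda>x. 1 + (\<epsilon> x * b' x + r' x)) \<longlongrightarrow> 1 + 0) F"
    by (intro tendsto_add tendsto_const) (auto dest: smalloD_tendsto)
  then have g: "(g \<longlongrightarrow> 1) F"
    by (simp add: r'_def)
  then have "((\<lambda>x. 1 / g x) \<longlongrightarrow> 1 / 1) F"
    by (intro tendsto_divide tendsto_const) auto
  then have "(\<lambda>x. 1 / g x) \<in> O[F](\<lambda>_. 1)"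
    by (rule tendsto_imp_bigo_1)
  then have "(\<lambda>x. (r x - r' x * a x - \<epsilon> x ^ 2 * (b' x * c x) - r' x * (c x * \<epsilon> x)) * (1 / g x))
      \<in> O[F](\<lambda>x. \<epsilon> x ^ 2)"
    using ab \<epsilon>(1) rr by (intro landau_o.big_1_mult sum_in_bigo(2) landau_o.big.mult_in_1) auto
  moreover have "\<forall>\<^sub>F x in F. g x \<noteq> 0"
    using g by (rule tendsto_imp_eventually_ne) simp
  then have "\<forall>\<^sub>F x in F. (r x - r' x * a x - \<epsilon> x ^ 2 * (b' x * c x) - r' x * (c x * \<epsilon> x)) * (1 / g x)
      = f x / g x - a x - c x * \<epsilon> x"
    by eventually_elim (simp add: r_def r'_def c_def field_simps power2_eq_square)
  ultimately have "(\<lambda>x. f x / g x - a x - c x * \<epsilon> x) \<in> O[F](\<lambda>x. \<epsilon> x ^ 2)"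
    by (simp add: landau_o.big.in_cong)
  with ab show ?thesis
    unfolding first_order_expansion_def c_def by blast
qed

lemma first_order_expansion_compose:
  assumes "first_order_expansion F \<epsilon> f a b" "filterlim h F G"
  shows "first_order_expansion G (\<lambda>x. \<epsilon> (h x)) (\<lambda>x. f (h x)) (\<lambda>x. a (h x)) (\<lambda>x. b (h x))"
proof -
  have "a \<in> O[F](\<lambda>_. 1)" "b \<in> O[F](\<lambda>_. 1)" "(\<lambda>x. f x - a x - b x * \<epsilon> x) \<in> O[F](\<lambda>x. \<epsilon> x ^ 2)"
    using assms(1) unfolding first_order_expansion_def by auto
  from this[THEN landau_o.big.compose, OF assms(2)] show ?thesis
    unfolding first_order_expansion_def by simp
qed

lemma first_order_expansion_exp:
  "first_order_expansion (at_right 0) (\<lambda>u. u) (\<lambda>u. exp (- (u * r))) (\<lambda>_. 1) (\<lambda>_. - r)"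
  unfolding first_order_expansion_def by (simp; real_asymp)

lemma first_order_expansion_exp_quotient:
  assumes "k > 0"
  shows "first_order_expansion (at_right 0) (\<lambda>u. u) (\<lambda>u. (1 - exp (- (u * k))) / (u * k))
           (\<lambda>_. 1) (\<lambda>_. - k / 2)"
  unfolding first_order_expansion_def using assms by (simp; real_asymp)

lemma bigo_first_order_expansion_rescaled:
  assumes "first_order_expansion (at_right 0) (\<lambda>u. u) h (\<lambda>_. A) (\<lambda>_. B)" "lam > 0"
  shows "(\<lambda>N. w N * (h (lam / real N) - (A + B * (lam / real N)))) \<in> O(\<lambda>N. w N * (1 / real N ^ 2))"
proof -
  have "filterlim (\<lambda>N. lam / real N) (at_right 0) sequentially"
    using assms(2) by (intro tendsto_imp_filterlim_at_right) real_asymp+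
  from first_order_expansion_compose[OF assms(1) this]
  have "(\<lambda>N. h (lam / real N) - (A + B * (lam / real N))) \<in> O(\<lambda>N. lam ^ 2 * (1 / real N ^ 2))"
    unfolding first_order_expansion_def by (simp add: power_divide diff_diff_eq)
  also have "O(\<lambda>N. lam ^ 2 * (1 / real N ^ 2)) = O(\<lambda>N. 1 / real N ^ 2)"
    using assms(2) by (intro landau_o.big.cmult) simp
  finally show ?thesis
    by (rule landau_o.big.mult_left)
qed

lemma eventually_prod_principal_iff:
  "eventually P (F \<times>\<^sub>F principal T) \<longleftrightarrow> eventually (\<lambda>u. \<forall>t\<in>T. P (u, t)) F"
proof
  assume "eventually P (F \<times>\<^sub>F principal T)"
  then obtain Pf Pg where "eventually Pf F" "\<forall>t\<in>T. Pg t" "\<forall>u t. Pf u \<longrightarrow> Pg t \<longrightarrow> P (u, t)"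
    unfolding eventually_prod_filter eventually_principal by blast
  then show "eventually (\<lambda>u. \<forall>t\<in>T. P (u, t)) F"
    by (auto elim: eventually_mono)
next
  assume "eventually (\<lambda>u. \<forall>t\<in>T. P (u, t)) F"
  then show "eventually P (F \<times>\<^sub>F principal T)"
    unfolding eventually_prod_filter eventually_principal by blast
qed

lemma bounded_imp_bigo_1_prod_principal:
  assumes "bounded (g ` T)"
  shows "(\<lambda>(u, t). g t) \<in> O[F \<times>\<^sub>F principal T](\<lambda>_. 1)"
proof -
  obtain B where "\<forall>t\<in>T. norm (g t) \<le> B"
    using assms by (auto simp: bounded_iff)
  then show ?thesis
    by (intro bigoI[where c = B]) (simp add: eventually_prod_principal_iff)
qed

lemma tendsto_fst_at_right_prod: "(fst \<longlongrightarrow> (0::real)) (at_right 0 \<times>\<^sub>F G)"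
  by (rule filterlim_mono[OF filterlim_fst at_within_le_nhds order_refl])

lemma first_order_expansion_one_minus_exp:
  assumes "bounded (g ` T)"
  shows "first_order_expansion (at_right 0 \<times>\<^sub>F principal T) fst
           (\<lambda>(u, t). 1 - g t * exp (- (u * r))) (\<lambda>(u, t). 1 - g t) (\<lambda>(u, t). r * g t)"
proof -
  let ?F = "at_right 0 \<times>\<^sub>F principal T"
  have "bounded ((\<lambda>t. - g t) ` T)"
    using assms by (simp add: image_image[symmetric])
  then have "first_order_expansion ?F fst (\<lambda>(u, t). - g t) (\<lambda>(u, t). - g t) (\<lambda>_. 0)"
    by (intro first_order_expansion_const bounded_imp_bigo_1_prod_principal)
  moreover have "first_order_expansion ?F fst (\<lambda>x. exp (- (fst x * r))) (\<lambda>_. 1) (\<lambda>_. - r)"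
    using first_order_expansion_compose[OF first_order_expansion_exp filterlim_fst] .
  ultimately have "first_order_expansion ?F fst (\<lambda>x. (case x of (u, t) \<Rightarrow> - g t) * exp (- (fst x * r)))
      (\<lambda>x. (case x of (u, t) \<Rightarrow> - g t) * 1) (\<lambda>x. (case x of (u, t) \<Rightarrow> - g t) * - r + 0 * 1)"
    by (intro first_order_expansion_mult tendsto_fst_at_right_prod)
  with first_order_expansion_const[of "\<lambda>_. 1" ?F fst, OF bigo_const]
  show ?thesis
    by (rule first_order_expansion_cong[OF first_order_expansion_add]) auto
qed

lemma first_order_expansion_prod_one_minus_exp:
  assumes "bounded (g ` T)" "finite K"
  shows "first_order_expansion (at_right 0 \<times>\<^sub>F principal T) fst
           (\<lambda>(u, t). \<Prod>k\<in>K. 1 - g t * exp (- (u * r k))) (\<lambda>(u, t). (1 - g t) ^ card K)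
           (\<lambda>(u, t). (\<Sum>k\<in>K. r k) * g t * (1 - g t) ^ (card K - 1))"
proof -
  have "first_order_expansion (at_right 0 \<times>\<^sub>F principal T) fst
      (\<lambda>x. \<Prod>k\<in>K. (\<lambda>(u, t). 1 - g t * exp (- (u * r k))) x) (\<lambda>x. (\<lambda>(u, t). 1 - g t) x ^ card K)
      (\<lambda>x. (\<Sum>k\<in>K. (\<lambda>(u, t). r k * g t) x) * (\<lambda>(u, t). 1 - g t) x ^ (card K - 1))"
    using assms by (intro first_order_expansion_prod tendsto_fst_at_right_prod
        first_order_expansion_one_minus_exp)
  then show ?thesis
    by (rule first_order_expansion_cong) (auto simp: sum_distrib_right)
qed

lemma first_order_expansion_integral:
  fixes f :: "real \<Rightarrow> real \<Rightarrow> real"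
  assumes "first_order_expansion (at_right 0 \<times>\<^sub>F principal {l..h}) fst
             (\<lambda>(u, t). f u t) (\<lambda>(u, t). a t) (\<lambda>(u, t). b t)"
    and "l \<le> h" "\<And>u. u > 0 \<Longrightarrow> continuous_on {l..h} (f u)"
    and "continuous_on {l..h} a" "continuous_on {l..h} b"
  shows "first_order_expansion (at_right 0) (\<lambda>u. u) (\<lambda>u. integral {l..h} (f u))
           (\<lambda>_. integral {l..h} a) (\<lambda>_. integral {l..h} b)"
proof -
  obtain C where "eventually (\<lambda>x. norm ((\<lambda>(u, t). f u t) x - (\<lambda>(u, t). a t) x - (\<lambda>(u, t). b t) x * fst x)
      \<le> C * norm (fst x ^ 2)) (at_right 0 \<times>\<^sub>F principal {l..h})"
    using assms(1) unfolding first_order_expansion_def bigo_def by auto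
  then have "eventually (\<lambda>u. \<forall>t\<in>{l..h}. \<bar>f u t - a t - b t * u\<bar> \<le> C * u ^ 2) (at_right 0)"
    unfolding eventually_prod_principal_iff by simp
  then have "eventually (\<lambda>u. u > 0 \<and> (\<forall>t\<in>{l..h}. \<bar>f u t - a t - b t * u\<bar> \<le> C * u ^ 2)) (at_right 0)"
    by (intro eventually_conj eventually_at_right_less)
  then have "eventually (\<lambda>u. norm (integral {l..h} (f u) - integral {l..h} a - integral {l..h} b * u)
      \<le> C * (h - l) * norm (u ^ 2)) (at_right 0)"
  proof eventually_elim
    case (elim u)
    have "norm (integral {l..h} (\<lambda>t. f u t - a t - b t * u)) \<le> C * u ^ 2 * (h - l)"
      using elim assms(2-5) by (intro integral_bound continuous_intros) auto
    moreover have "integral {l..h} (\<lambda>t. f u t - a t - b t * u) =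
        integral {l..h} (f u) - integral {l..h} a - integral {l..h} b * u"
      using elim assms(3-5)
      by (intro integral_unique has_integral_diff has_integral_mult_left integrable_integral
          integrable_continuous_interval) auto
    ultimately show ?case
      by (simp add: mult_ac)
  qed
  then show ?thesis
    unfolding first_order_expansion_def by (intro conjI bigo_const bigoI)
qed

lemma gauss_sum_real: "(\<Sum>k=1..n. real k) = real n * (real n + 1) / 2"
  by (induction n) (simp_all add: field_simps)

lemma sum_shifted_gauss_real: "(\<Sum>k=1..n. x - real n + real k) = real n * (2 * x - real n + 1) / 2"
proof -
  have "(\<Sum>k=1..n. x - real n + real k) = real n * (x - real n) + (\<Sum>k=1..n. real k)"
    by (simp add: sum.distrib)
  also have "\<dots> = real n * (2 * x - real n + 1) / 2"
    unfolding gauss_sum_real by (simp add: field_simps)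
  finally show ?thesis .
qed

(* The q-factorial at q = exp (-u), divided by its limiting behaviour u^m m! as u \<rightarrow> 0+. *)
definition qfact_ratio :: "nat \<Rightarrow> real \<Rightarrow> real" where
  "qfact_ratio m u = (\<Prod>k=1..m. (1 - exp (- (u * real k))) / (u * real k))"

lemma qfact_exp_eq:
  assumes "u > 0"
  shows "(\<Prod>k=1..m. 1 - exp (- u) ^ k) = u ^ m * fact m * qfact_ratio m u"
proof -
  have "(\<Prod>k=1..m. 1 - exp (- u) ^ k) =
      (\<Prod>k=1..m. (u * real k) * ((1 - exp (- (u * real k))) / (u * real k)))"
    using assms by (intro prod.cong) (auto simp: exp_of_nat_mult[symmetric] mult.commute)
  also have "\<dots> = (\<Prod>k=1..m. u * real k) * qfact_ratio m u"
    by (simp only: prod.distrib qfact_ratio_def)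
  also have "(\<Prod>k=1..m. u * real k) = u ^ m * fact m"
    by (simp add: prod.distrib fact_prod)
  finally show ?thesis .
qed

lemma qbinom_exp_eq:
  assumes "u > 0"
  shows "qbinom (exp (- u)) x m =
           (\<Prod>k=1..m. 1 - exp (- (u * (x - real m + real k)))) / (u ^ m * fact m * qfact_ratio m u)"
  using assms by (simp add: qbinom_def prod_dividef qfact_exp_eq[symmetric] exp_powr_real)

lemma first_order_expansion_qfact_ratio:
  "first_order_expansion (at_right 0) (\<lambda>u. u) (qfact_ratio m) (\<lambda>_. 1) (\<lambda>_. - (real m * (real m + 1) / 4))"
proof -
  have "first_order_expansion (at_right 0) (\<lambda>u. u)
      (\<lambda>u. \<Prod>k=1..m. (1 - exp (- (u * real k))) / (u * real k))
      (\<lambda>_. 1 ^ card {1..m}) (\<lambda>_. (\<Sum>k=1..m. - real k / 2) * 1 ^ (card {1..m} - 1))"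
    by (intro first_order_expansion_prod first_order_expansion_exp_quotient tendsto_ident_at) auto
  moreover have "(\<Sum>k=1..m. - real k / 2) = - (real m * (real m + 1) / 4)"
    unfolding sum_negf sum_divide_distrib[symmetric] gauss_sum_real by simp
  ultimately show ?thesis
    by (simp add: qfact_ratio_def[abs_def])
qed

context
  fixes lam c :: real and d p i :: nat
begin

(* With u = lam / N, q = exp (-u) and s = exp (-lam) = q^N, this is f_i^(c,d)(N t) without its
   q-factorial denominators. *)
definition fcd_numerator :: "real \<Rightarrow> real \<Rightarrow> real" where
  "fcd_numerator u t =
     exp (- lam) powr (c * real (p - i) + real p * t) * exp (- (u * (real d * real (p - i)))) *
     (\<Prod>k=1..i. 1 - exp (- lam) powr (c + t) * exp (- (u * (real d - real i + real k)))) *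
     (\<Prod>k=1..p - i. 1 - exp (- lam) powr t * exp (- (u * real k)))"

lemma fcd_eq_fcd_numerator:
  assumes "lam > 0" "i \<le> p" "N > 0"
  defines "u \<equiv> lam / N"
  shows "fcd (exp (- lam / N)) p i c N d (N * t) =
           fcd_numerator u t / (u ^ p * (fact i * fact (p - i)) * (qfact_ratio i u * qfact_ratio (p - i) u))"
proof -
  have u: "u > 0" "exp (- lam / N) = exp (- u)" and lam: "lam = u * N"
    using assms by (simp_all add: u_def)
  have "exp (- u) powr ((c * N + real d) * real (p - i) + real p * (N * t)) =
      exp (- lam) powr (c * real (p - i) + real p * t) * exp (- (u * (real d * real (p - i))))"
    by (simp add: exp_powr_real lam exp_add[symmetric] algebra_simps)
  moreover have "(\<Prod>k=1..i. 1 - exp (- (u * (c * N + real d + N * t - real i + real k)))) =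
      (\<Prod>k=1..i. 1 - exp (- lam) powr (c + t) * exp (- (u * (real d - real i + real k))))"
    by (intro prod.cong) (simp_all add: exp_powr_real lam exp_add[symmetric] algebra_simps)
  moreover have "(\<Prod>k=1..p - i. 1 - exp (- (u * (real (p - i) + N * t - real (p - i) + real k)))) =
      (\<Prod>k=1..p - i. 1 - exp (- lam) powr t * exp (- (u * real k)))"
    by (intro prod.cong) (simp_all add: exp_powr_real lam exp_add[symmetric] algebra_simps)
  moreover have "u ^ i * u ^ (p - i) = u ^ p"
    using assms(2) by (simp add: power_add[symmetric])
  ultimately show ?thesis
    unfolding fcd_def u(2) qbinom_exp_eq[OF u(1)] fcd_numerator_def by (simp add: field_simps)
qed

lemma integral_fcd_eq:
  assumes "lam > 0" "i \<le> p" "N > 0"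
  defines "u \<equiv> lam / N"
  shows "integral {0..1} (\<lambda>t. fcd (exp (- lam / N)) p i c N d (N * t)) =
           (N / lam) ^ p * (1 / (fact i * fact (p - i))) *
           (integral {0..1} (fcd_numerator u) / (qfact_ratio i u * qfact_ratio (p - i) u))"
  unfolding fcd_eq_fcd_numerator[OF assms(1-3)] integral_divide u_def
  by (simp add: divide_inverse power_mult_distrib power_inverse)

definition integrand_A0 :: "real \<Rightarrow> real" where
  "integrand_A0 t = exp (- lam) powr (real p * t) * (1 - exp (- lam) powr t) ^ (p - i) *
     (1 - exp (- lam) powr (c + t)) ^ i"

definition integrand_A1 :: "real \<Rightarrow> real" where
  "integrand_A1 t = exp (- lam) powr (real (p + 1) * t) * (1 - exp (- lam) powr t) ^ (p - i) *
     (1 - exp (- lam) powr (c + t)) ^ (i - 1)"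

definition integrand_A2 :: "real \<Rightarrow> real" where
  "integrand_A2 t = exp (- lam) powr (real (p + 1) * t) * (1 - exp (- lam) powr t) ^ (p - i - 1) *
     (1 - exp (- lam) powr (c + t)) ^ i"

lemma first_order_expansion_fcd_numerator:
  "first_order_expansion (at_right 0 \<times>\<^sub>F principal {0..1}) fst (\<lambda>(u, t). fcd_numerator u t)
     (\<lambda>(u, t). exp (- lam) powr (c * real (p - i)) * integrand_A0 t)
     (\<lambda>(u, t). exp (- lam) powr (c * real (p - i)) *
        (exp (- lam) powr c * (real i * (2 * real d - real i + 1) / 2) * integrand_A1 t
         + real (p - i) * real (p - i + 1) / 2 * integrand_A2 t
         - real d * real (p - i) * integrand_A0 t))"
proof -
  let ?F = "at_right (0::real) \<times>\<^sub>F principal {0..1::real}"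
  let ?s = "\<lambda>x. exp (- lam) powr x"
  have bounded: "bounded (g ` {0..1})" if "continuous_on {0..1} g" for g :: "real \<Rightarrow> real"
    by (rule compact_imp_bounded[OF compact_continuous_image[OF that compact_Icc]])
  have e1: "first_order_expansion ?F fst (\<lambda>(u, t). ?s (c * real (p - i) + real p * t))
      (\<lambda>(u, t). ?s (c * real (p - i) + real p * t)) (\<lambda>_. 0)"
    by (intro first_order_expansion_const bounded_imp_bigo_1_prod_principal bounded continuous_intros)
      simp
  have e2: "first_order_expansion ?F fst (\<lambda>x. exp (- (fst x * (real d * real (p - i)))))
      (\<lambda>_. 1) (\<lambda>_. - (real d * real (p - i)))"
    using first_order_expansion_compose[OF first_order_expansion_exp filterlim_fst] .
  have bnd: "bounded ((\<lambda>t. ?s (c + t)) ` {0..1})" "bounded (?s ` {0..1})"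
    by (intro bounded continuous_intros; simp)+
  have e3: "first_order_expansion ?F fst
      (\<lambda>(u, t). \<Prod>k=1..i. 1 - ?s (c + t) * exp (- (u * (real d - real i + real k))))
      (\<lambda>(u, t). (1 - ?s (c + t)) ^ i)
      (\<lambda>(u, t). real i * (2 * real d - real i + 1) / 2 * ?s (c + t) * (1 - ?s (c + t)) ^ (i - 1))"
    using first_order_expansion_prod_one_minus_exp[OF bnd(1), where K = "{1..i}"
        and r = "\<lambda>k. real d - real i + real k"]
    unfolding sum_shifted_gauss_real by simp
  have e4: "first_order_expansion ?F fst (\<lambda>(u, t). \<Prod>k=1..p - i. 1 - ?s t * exp (- (u * real k)))
      (\<lambda>(u, t). (1 - ?s t) ^ (p - i))
      (\<lambda>(u, t). real (p - i) * real (p - i + 1) / 2 * ?s t * (1 - ?s t) ^ (p - i - 1))"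
    using first_order_expansion_prod_one_minus_exp[OF bnd(2), where K = "{1..p - i}" and r = real]
    unfolding gauss_sum_real by (simp add: add.commute)
  have powr: "?s (c * real (p - i) + real p * t) = ?s (c * real (p - i)) * ?s (real p * t)"
    "?s (c + t) = ?s c * ?s t" "?s (real (p + 1) * t) = ?s (real p * t) * ?s t" for t
    by (simp_all add: powr_add distrib_right)
  from first_order_expansion_mult[OF tendsto_fst_at_right_prod
      first_order_expansion_mult[OF tendsto_fst_at_right_prod
        first_order_expansion_mult[OF tendsto_fst_at_right_prod e1 e2] e3] e4]
  show ?thesis
    apply (rule first_order_expansion_cong)
    subgoal for x by (cases x) (simp add: fcd_numerator_def)
    subgoal for x by (cases x) (simp add: integrand_A0_def powr)
    subgoal for x
      by (cases x) (simp only: case_prod_conv integrand_A0_def integrand_A1_def integrand_A2_def powr,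
          simp add: algebra_simps)
    done
qed

lemma first_order_expansion_integral_fcd_numerator:
  "first_order_expansion (at_right 0) (\<lambda>u. u) (\<lambda>u. integral {0..1} (fcd_numerator u))
     (\<lambda>_. exp (- lam) powr (c * real (p - i)) * integral {0..1} integrand_A0)
     (\<lambda>_. exp (- lam) powr (c * real (p - i)) *
        (exp (- lam) powr c * (real i * (2 * real d - real i + 1) / 2) * integral {0..1} integrand_A1
         + real (p - i) * real (p - i + 1) / 2 * integral {0..1} integrand_A2
         - real d * real (p - i) * integral {0..1} integrand_A0))"
proof -
  have cont: "continuous_on {0..1} integrand_A0" "continuous_on {0..1} integrand_A1"
    "continuous_on {0..1} integrand_A2" "continuous_on {0..1} (fcd_numerator u)" for u
    unfolding integrand_A0_def[abs_def] integrand_A1_def[abs_def] integrand_A2_def[abs_def]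
      fcd_numerator_def[abs_def]
    by (intro continuous_intros | simp)+
  then have int: "integrand_A0 integrable_on {0..1}" "integrand_A1 integrable_on {0..1}"
    "integrand_A2 integrable_on {0..1}"
    by (auto intro: integrable_continuous_interval)
  let ?C = "exp (- lam) powr (c * real (p - i))"
  let ?c1 = "exp (- lam) powr c * (real i * (2 * real d - real i + 1) / 2)"
  let ?c2 = "real (p - i) * real (p - i + 1) / 2"
  let ?c0 = "real d * real (p - i)"
  have "first_order_expansion (at_right 0) (\<lambda>u. u) (\<lambda>u. integral {0..1} (fcd_numerator u))
      (\<lambda>_. integral {0..1} (\<lambda>t. ?C * integrand_A0 t))
      (\<lambda>_. integral {0..1} (\<lambda>t. ?C * (?c1 * integrand_A1 t + ?c2 * integrand_A2 t - ?c0 * integrand_A0 t)))"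
    by (rule first_order_expansion_integral[OF first_order_expansion_fcd_numerator])
      (intro continuous_intros cont | simp)+
  moreover have "integral {0..1} (\<lambda>t. ?C * integrand_A0 t) = ?C * integral {0..1} integrand_A0"
    by (intro integral_unique has_integral_mult_right integrable_integral int)
  moreover have "integral {0..1} (\<lambda>t. ?C * (?c1 * integrand_A1 t + ?c2 * integrand_A2 t - ?c0 * integrand_A0 t)) =
      ?C * (?c1 * integral {0..1} integrand_A1 + ?c2 * integral {0..1} integrand_A2
            - ?c0 * integral {0..1} integrand_A0)"
    by (intro integral_unique has_integral_mult_right has_integral_diff has_integral_add
        integrable_integral int)
  ultimately show ?thesis
    by simp
qed

lemma first_order_expansion_fcd_ratio:
  assumes "i \<le> p"
  shows "first_order_expansion (at_right 0) (\<lambda>u. u)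
     (\<lambda>u. integral {0..1} (fcd_numerator u) / (qfact_ratio i u * qfact_ratio (p - i) u))
     (\<lambda>_. exp (- lam) powr (c * real (p - i)) * integral {0..1} integrand_A0)
     (\<lambda>_. exp (- lam) powr (c * real (p - i)) *
        (exp (- lam) powr c * (real i * (2 * real d - real i + 1) / 2) * integral {0..1} integrand_A1
         + real (p - i) * real (p - i + 1) / 2 * integral {0..1} integrand_A2
         + (4 * real d * real i + 2 * real i ^ 2 + real p - 4 * real d * real p
            - 2 * real i * real p + real p ^ 2) / 4 * integral {0..1} integrand_A0))"
proof -
  have "first_order_expansion (at_right 0) (\<lambda>u. u) (\<lambda>u. qfact_ratio i u * qfact_ratio (p - i) u)
      (\<lambda>_. 1) (\<lambda>_. - (real i * (real i + 1) + real (p - i) * (real (p - i) + 1)) / 4)"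
    using first_order_expansion_mult[OF tendsto_ident_at first_order_expansion_qfact_ratio[of i]
        first_order_expansion_qfact_ratio[of "p - i"]]
    by (rule first_order_expansion_cong) (simp_all add: field_simps)
  from first_order_expansion_divide[OF tendsto_ident_at first_order_expansion_integral_fcd_numerator this]
  show ?thesis
    using assms by (simp add: field_simps power2_eq_square)
qed

end

theorem lemma2p8:
  fixes c lam :: real and d p i :: nat
  assumes "c \<ge> 0" and "lam > 0" and "p \<ge> 1" and "i \<le> p"
  defines "s \<equiv> exp (- lam)"
  defines "A0 \<equiv> s powr (c * real (p - i)) *
      integral {0..1} (\<lambda>t. s powr (real p * t) * (1 - s powr t) ^ (p - i) * (1 - s powr (c + t)) ^ i)"
  defines "A1 \<equiv> s powr (c * real (p - i + 1)) * (real i * (2 * real d - real i + 1) / 2) *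
      integral {0..1} (\<lambda>t. s powr (real (p + 1) * t) * (1 - s powr t) ^ (p - i) * (1 - s powr (c + t)) ^ (i - 1))"
  defines "A2 \<equiv> s powr (c * real (p - i)) * (real (p - i) * real (p - i + 1) / 2) *
      integral {0..1} (\<lambda>t. s powr (real (p + 1) * t) * (1 - s powr t) ^ (p - i - 1) * (1 - s powr (c + t)) ^ i)"
  defines "A3 \<equiv> (4 * real d * real i + 2 * real i ^ 2 + real p - 4 * real d * real p
                 - 2 * real i * real p + real p ^ 2) / 4 * A0"
  shows "(\<lambda>N::nat. integral {0..1} (\<lambda>t. fcd (exp (- lam / real N)) p i c (real N) d (real N * t))
            - (real N / lam) ^ p * (1 / (fact i * fact (p - i)))
              * (A0 + (A1 + A2 + A3) * (lam / real N)))
         \<in> O(\<lambda>N. (real N / lam) ^ p * (1 / real N ^ 2))"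
proof -
  let ?C = "exp (- lam) powr (c * real (p - i))"
  have A: "A0 = ?C * integral {0..1} (integrand_A0 lam c p i)"
    "A1 = ?C * (exp (- lam) powr c * (real i * (2 * real d - real i + 1) / 2) *
                integral {0..1} (integrand_A1 lam c p i))"
    "A2 = ?C * (real (p - i) * real (p - i + 1) / 2 * integral {0..1} (integrand_A2 lam c p i))"
    unfolding A0_def A1_def A2_def s_def integrand_A0_def[abs_def] integrand_A1_def[abs_def]
      integrand_A2_def[abs_def]
    by (simp_all add: powr_add distrib_left)
  define h where "h u = integral {0..1} (fcd_numerator lam c d p i u) /
                          (qfact_ratio i u * qfact_ratio (p - i) u)" for u
  have "first_order_expansion (at_right 0) (\<lambda>u. u) h (\<lambda>_. A0) (\<lambda>_. A1 + A2 + A3)"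
    using first_order_expansion_fcd_ratio[OF assms(4), of lam c d]
    unfolding h_def[abs_def] A3_def A by (rule first_order_expansion_cong) (simp_all add: algebra_simps)
  from bigo_first_order_expansion_rescaled[OF this assms(2), where w = "\<lambda>N. (real N / lam) ^ p"]
  have bound: "(\<lambda>N. 1 / (fact i * fact (p - i)) * ((real N / lam) ^ p *
      (h (lam / real N) - (A0 + (A1 + A2 + A3) * (lam / real N)))))
    \<in> O(\<lambda>N. (real N / lam) ^ p * (1 / real N ^ 2))"
    by simp
  have ev: "\<forall>\<^sub>F N in sequentially. 1 / (fact i * fact (p - i)) * ((real N / lam) ^ p *
      (h (lam / real N) - (A0 + (A1 + A2 + A3) * (lam / real N)))) =
    integral {0..1} (\<lambda>t. fcd (exp (- lam / real N)) p i c (real N) d (real N * t))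
      - (real N / lam) ^ p * (1 / (fact i * fact (p - i))) * (A0 + (A1 + A2 + A3) * (lam / real N))"
    using eventually_gt_at_top[of 0]
    by eventually_elim (subst integral_fcd_eq[OF assms(2,4)], simp_all add: h_def right_diff_distrib)
  show ?thesis
    by (rule iffD1[OF landau_o.big.in_cong[OF ev] bound])
qed

end
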